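(* Let $n,m\ge 3$ and let $G=P_n\square P_m$ be the grid graph. No minimal resolving set of $G$ contains three vertices that are on the same line.
   Context: The grid graph $P_n\square P_m$ has vertex set $\{(i,j):0\le i\le n-1,\ 0\le j\le m-1\}$, with $(i,j)$ adjacent to $(k,l)$ iff $|i-k|+|j-l|=1$; distance $d((i,j),(k,l))=|i-k|+|j-l|$. A vertex $w$ resolves $u,v$ if $d(w,u)\ne d(w,v)$; a set $R$ is resolving if every pair of distinct vertices is resolved by some vertex of $R$; a minimal resolving set is a resolving set $R$ such that no $R\setminus\{x\}$, $x\in R$, is resolving. Vertices are on the same line if they all share their first coordinate or all share their second coordinate. *)

theory Defs
  imports Main
begin

definition grid_vertices :: "nat \<Rightarrow> nat \<Rightarrow> (nat \<times> nat) set" where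
  "grid_vertices n m = {(i, j). i < n \<and> j < m}"

definition grid_dist :: "nat \<times> nat \<Rightarrow> nat \<times> nat \<Rightarrow> nat" where
  "grid_dist u v = nat \<bar>int (fst u) - int (fst v)\<bar> + nat \<bar>int (snd u) - int (snd v)\<bar>"

definition resolves :: "nat \<times> nat \<Rightarrow> nat \<times> nat \<Rightarrow> nat \<times> nat \<Rightarrow> bool" where
  "resolves w u v \<longleftrightarrow> grid_dist w u \<noteq> grid_dist w v"

definition resolving_set :: "nat \<Rightarrow> nat \<Rightarrow> (nat \<times> nat) set \<Rightarrow> bool" where
  "resolving_set n m R \<longleftrightarrow> R \<subseteq> grid_vertices n m \<and>
     (\<forall>u \<in> grid_vertices n m. \<forall>v \<in> grid_vertices n m. u \<noteq> v \<longrightarrow> (\<exists>w \<in> R. resolves w u v))"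

definition minimal_resolving_set :: "nat \<Rightarrow> nat \<Rightarrow> (nat \<times> nat) set \<Rightarrow> bool" where
  "minimal_resolving_set n m R \<longleftrightarrow> resolving_set n m R \<and>
     (\<forall>x \<in> R. \<not> resolving_set n m (R - {x}))"

definition same_line :: "(nat \<times> nat) set \<Rightarrow> bool" where
  "same_line S \<longleftrightarrow> (\<exists>a. \<forall>v \<in> S. fst v = a) \<or> (\<exists>b. \<forall>v \<in> S. snd v = b)"

end

theory Submission
  imports Defs
begin

text \<open>If three distinct resolving vertices lie on a line, say in one row, the distance from
the middle one to a vertex differs from the distance from an end vertex only in the column
part. Since \<open>t \<mapsto> \<bar>t - p\<bar> - \<bar>t - q\<bar>\<close> is monotone, a pair \<open>u, v\<close> that is resolved by neither end
vertex is not resolved by the middle one either. So the middle vertex can be deleted from the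
resolving set, contradicting minimality.\<close>

lemma abs_diff_diff_eq_between:
  fixes a b c p q :: "'a::linordered_idom"
  assumes "a \<le> b" "b \<le> c" "\<bar>a - p\<bar> - \<bar>a - q\<bar> = \<bar>c - p\<bar> - \<bar>c - q\<bar>"
  shows "\<bar>b - p\<bar> - \<bar>b - q\<bar> = \<bar>a - p\<bar> - \<bar>a - q\<bar>"
  using assms by (simp add: abs_if split: if_splits)

lemma add_abs_diff_diff_eq_0_between:
  fixes a b c p q k :: "'a::linordered_idom"
  assumes "a \<le> b \<and> b \<le> c \<or> c \<le> b \<and> b \<le> a"
    and "k + (\<bar>a - p\<bar> - \<bar>a - q\<bar>) = 0" "k + (\<bar>c - p\<bar> - \<bar>c - q\<bar>) = 0"
  shows "k + (\<bar>b - p\<bar> - \<bar>b - q\<bar>) = 0"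
  using assms abs_diff_diff_eq_between[of a b c p q] abs_diff_diff_eq_between[of c b a p q]
  by auto

definition between :: "nat \<times> nat \<Rightarrow> nat \<times> nat \<Rightarrow> nat \<times> nat \<Rightarrow> bool" where
  "between x y z \<longleftrightarrow>
     (fst x = fst y \<and> fst y = fst z \<and>
        (snd x \<le> snd y \<and> snd y \<le> snd z \<or> snd z \<le> snd y \<and> snd y \<le> snd x)) \<or>
     (snd x = snd y \<and> snd y = snd z \<and>
        (fst x \<le> fst y \<and> fst y \<le> fst z \<or> fst z \<le> fst y \<and> fst y \<le> fst x))"

lemma grid_dist_eq_iff:
  "grid_dist w u = grid_dist w v \<longleftrightarrow>
     (\<bar>int (fst w) - int (fst u)\<bar> - \<bar>int (fst w) - int (fst v)\<bar>) +
     (\<bar>int (snd w) - int (snd u)\<bar> - \<bar>int (snd w) - int (snd v)\<bar>) = 0"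
  unfolding grid_dist_def by linarith

lemma resolves_between:
  assumes "between x y z" "resolves y u v"
  shows "resolves x u v \<or> resolves z u v"
proof (rule ccontr)
  assume "\<not> (resolves x u v \<or> resolves z u v)"
  then have x: "grid_dist x u = grid_dist x v" and z: "grid_dist z u = grid_dist z v"
    unfolding resolves_def by auto
  from assms(1) consider
      (row) "fst x = fst y" "fst y = fst z"
        "snd x \<le> snd y \<and> snd y \<le> snd z \<or> snd z \<le> snd y \<and> snd y \<le> snd x"
    | (column) "snd x = snd y" "snd y = snd z"
        "fst x \<le> fst y \<and> fst y \<le> fst z \<or> fst z \<le> fst y \<and> fst y \<le> fst x"
    unfolding between_def by blast
  then have "grid_dist y u = grid_dist y v"
  proof cases
    case row
    show ?thesis
      unfolding grid_dist_eq_iff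
    proof (rule add_abs_diff_diff_eq_0_between)
      show "int (snd x) \<le> int (snd y) \<and> int (snd y) \<le> int (snd z) \<or>
          int (snd z) \<le> int (snd y) \<and> int (snd y) \<le> int (snd x)"
        using row(3) by simp
    qed (use x z in \<open>simp_all add: grid_dist_eq_iff row(1) row(2)[symmetric]\<close>)
  next
    case column
    show ?thesis
      unfolding grid_dist_eq_iff add.commute[of "\<bar>int (fst y) - int (fst u)\<bar> - _"]
    proof (rule add_abs_diff_diff_eq_0_between)
      show "int (fst x) \<le> int (fst y) \<and> int (fst y) \<le> int (fst z) \<or>
          int (fst z) \<le> int (fst y) \<and> int (fst y) \<le> int (fst x)"
        using column(3) by simp
    qed (use x z in \<open>simp_all add: grid_dist_eq_iff column(1) column(2)[symmetric] add.commute\<close>)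
  qed
  with assms(2) show False
    unfolding resolves_def by simp
qed

lemma one_of_three_between:
  fixes a b c :: "'a::linorder"
  shows "a \<le> b \<and> b \<le> c \<or> c \<le> b \<and> b \<le> a \<or>
    b \<le> a \<and> a \<le> c \<or> c \<le> a \<and> a \<le> b \<or>
    a \<le> c \<and> c \<le> b \<or> b \<le> c \<and> c \<le> a"
  by (metis linear)

lemma between_of_same_line:
  assumes "same_line {x, y, z}"
  shows "between x y z \<or> between y x z \<or> between x z y"
proof -
  from assms consider "fst y = fst x" "fst z = fst x" | "snd y = snd x" "snd z = snd x"
    unfolding same_line_def by auto
  then show ?thesis
  proof cases
    case 1
    with one_of_three_between[of "snd x" "snd y" "snd z"] show ?thesis
      unfolding between_def by (simp; blast)
  next
    case 2
    with one_of_three_between[of "fst x" "fst y" "fst z"] show ?thesis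
      unfolding between_def by (simp; blast)
  qed
qed

lemma resolving_set_Diff_between:
  assumes "resolving_set n m R" "x \<in> R" "z \<in> R" "x \<noteq> y" "z \<noteq> y" "between x y z"
  shows "resolving_set n m (R - {y})"
  using assms resolves_between unfolding resolving_set_def by blast

theorem lemma5:
  fixes n m :: nat and R :: "(nat \<times> nat) set"
  assumes "n \<ge> 3" and "m \<ge> 3"
    and "minimal_resolving_set n m R"
  shows "\<not> (\<exists>x y z. x \<in> R \<and> y \<in> R \<and> z \<in> R \<and> x \<noteq> y \<and> x \<noteq> z \<and> y \<noteq> z
                 \<and> same_line {x, y, z})"
proof
  assume "\<exists>x y z. x \<in> R \<and> y \<in> R \<and> z \<in> R \<and> x \<noteq> y \<and> x \<noteq> z \<and> y \<noteq> z
                 \<and> same_line {x, y, z}"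
  then obtain x y z where xyz: "x \<in> R" "y \<in> R" "z \<in> R" "x \<noteq> y" "x \<noteq> z" "y \<noteq> z"
    and line: "same_line {x, y, z}"
    by blast
  have R: "resolving_set n m R" and minimal: "\<forall>w\<in>R. \<not> resolving_set n m (R - {w})"
    using assms(3) unfolding minimal_resolving_set_def by auto
  from between_of_same_line[OF line] show False
  proof (elim disjE)
    assume "between x y z"
    from resolving_set_Diff_between[OF R xyz(1,3,4) not_sym[OF xyz(6)] this]
    show False using minimal xyz(2) by blast
  next
    assume "between y x z"
    from resolving_set_Diff_between[OF R xyz(2,3) not_sym[OF xyz(4)] not_sym[OF xyz(5)] this]
    show False using minimal xyz(1) by blast
  next
    assume "between x z y"
    from resolving_set_Diff_between[OF R xyz(1,2,5,6) this]
    show False using minimal xyz(3) by blast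
  qed
qed

end
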